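(* In the Byblos protocol described in the context, if a transaction $T$ is in $\mathit{confirmed}[t]$ at one correct server and in $\mathit{confirmed}[t']$ at another correct server, then $t = t'$.
   Context: Byblos protocol. There are $n=4f+1$ servers, at most $f$ of which are Byzantine; the rest are correct. Clients are not Byzantine (they may crash). Messages between correct parties are eventually delivered, channels are FIFO, senders are authenticated, and every client message (including when forwarded by a server) is signed by the client and cannot be forged. Each correct server keeps an integer $\mathit{clock}$ (initially $0$), sets $\mathit{proposed}[s]$ of pairs $(T,k)$ for each server $s$, and maps $\mathit{confirmed}[t]$, $\mathit{pending}[t]$ from integer timestamps to sets of transactions (initially empty). Client with transaction $T$: broadcasts $\mathrm{Propose}(T)$ to all servers; waits for $\mathrm{ProposeAck}(T,\cdot)$ from at least $n-f$ servers; letting $\mathit{timestamp}[s]$ be the value received from server $s$ ($0$ if none), sets $\hat t$ to $1$ plus the $(f+1)$-st largest value of $\mathit{timestamp}[\cdot]$; then broadcasts $\mathrm{Confirm}(T,\hat t)$ once. Correct server: on $\mathrm{Propose}(T)$ from a client, adds $(T,\mathit{clock})$ to $\mathit{proposed}[\mathit{self}]$, sends $\mathrm{Proposed}(T,\mathit{clock})$ to all servers and $\mathrm{ProposeAck}(T,\mathit{clock})$ to the client; on $\mathrm{Proposed}(T,k)$ from server $s$, adds $(T,k)$ to $\mathit{proposed}[s]$; on $\mathrm{Confirm}(T,\hat t)$ received from a client or forwarded by a server, sets $\mathit{clock}:=\max(\mathit{clock},\hat t)$, adds $T$ to $\mathit{confirmed}[\hat t]$, and forwards $\mathrm{Confirm}(T,\hat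 t)$ to all servers if not previously done. *)

theory Defs
  imports Main
begin

text \<open>Each transaction T is submitted by its own (non-Byzantine, possibly crashing)
  client, modelled as the party Client T.  Channels are FIFO queues between
  authenticated parties.  Client-signed messages (Propose, Confirm) can only be
  sent by a Byzantine server if the client has actually produced them
  (unforgeability).\<close>

datatype 'tx msg =
    Propose 'tx
  | ProposeAck 'tx int
  | Proposed 'tx int
  | Confirm 'tx int

datatype 'tx party = Client 'tx | Server nat

datatype cstate = Idle | Waiting "nat \<Rightarrow> int option" | Done

record 'tx sstate =
  clock :: int
  proposed :: "nat \<Rightarrow> ('tx \<times> int) set"
  confirmed :: "int \<Rightarrow> 'tx set"
  pending :: "int \<Rightarrow> 'tx set"
  forwarded :: "('tx \<times> int) set"

record 'tx gstate =
  sst :: "nat \<Rightarrow> 'tx sstate"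
  cst :: "'tx \<Rightarrow> cstate"
  chan :: "'tx party \<Rightarrow> 'tx party \<Rightarrow> 'tx msg list"
  sigs :: "'tx msg set"

definition sstate0 :: "'tx sstate" where
  "sstate0 = \<lparr>clock = 0, proposed = (\<lambda>_. {}), confirmed = (\<lambda>_. {}),
              pending = (\<lambda>_. {}), forwarded = {}\<rparr>"

definition gstate0 :: "'tx gstate" where
  "gstate0 = \<lparr>sst = (\<lambda>_. sstate0), cst = (\<lambda>_. Idle), chan = (\<lambda>_ _. []), sigs = {}\<rparr>"

definition send :: "'tx party \<Rightarrow> 'tx party \<Rightarrow> 'tx msg
    \<Rightarrow> ('tx party \<Rightarrow> 'tx party \<Rightarrow> 'tx msg list) \<Rightarrow> ('tx party \<Rightarrow> 'tx party \<Rightarrow> 'tx msg list)" where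
  "send p q m ch = ch(p := (ch p)(q := ch p q @ [m]))"

definition bcast :: "nat \<Rightarrow> 'tx party \<Rightarrow> 'tx msg
    \<Rightarrow> ('tx party \<Rightarrow> 'tx party \<Rightarrow> 'tx msg list) \<Rightarrow> ('tx party \<Rightarrow> 'tx party \<Rightarrow> 'tx msg list)" where
  "bcast n p m ch = (\<lambda>a b. if a = p \<and> (\<exists>s<n. b = Server s) then ch a b @ [m] else ch a b)"

definition deq :: "'tx party \<Rightarrow> 'tx party
    \<Rightarrow> ('tx party \<Rightarrow> 'tx party \<Rightarrow> 'tx msg list) \<Rightarrow> ('tx party \<Rightarrow> 'tx party \<Rightarrow> 'tx msg list)" where
  "deq p q ch = ch(p := (ch p)(q := tl (ch p q)))"

text \<open>The client's value: 1 plus the (f+1)-st largest of timestamp[s], s < n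
  (timestamp[s] = 0 if no ack from s).\<close>
definition client_ts :: "nat \<Rightarrow> nat \<Rightarrow> (nat \<Rightarrow> int option) \<Rightarrow> int" where
  "client_ts n f ts =
     rev (sort (map (\<lambda>s. case ts s of None \<Rightarrow> 0 | Some k \<Rightarrow> k) [0..<n])) ! f + 1"

definition byz_ok :: "'tx msg set \<Rightarrow> 'tx msg \<Rightarrow> bool" where
  "byz_ok S m = (case m of Propose T \<Rightarrow> m \<in> S | Confirm T t \<Rightarrow> m \<in> S | _ \<Rightarrow> True)"

inductive reach :: "nat \<Rightarrow> nat \<Rightarrow> nat set \<Rightarrow> 'tx gstate \<Rightarrow> bool"
  for n :: nat and f :: nat and Byz :: "nat set" where
  init: "reach n f Byz gstate0"
| client_propose:
    "\<lbrakk>reach n f Byz g; cst g T = Idle\<rbrakk> \<Longrightarrow>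
     reach n f Byz (g\<lparr>cst := (cst g)(T := Waiting (\<lambda>_. None)),
                    chan := bcast n (Client T) (Propose T) (chan g),
                    sigs := insert (Propose T) (sigs g)\<rparr>)"
| client_recv:
    "\<lbrakk>reach n f Byz g; chan g (Server s) (Client T) = m # rest\<rbrakk> \<Longrightarrow>
     reach n f Byz (g\<lparr>cst := (case (cst g T, m) of
                        (Waiting ts, ProposeAck T' k) \<Rightarrow>
                           if T' = T \<and> ts s = None
                           then (cst g)(T := Waiting (ts(s := Some k))) else cst g
                      | _ \<Rightarrow> cst g),
                    chan := deq (Server s) (Client T) (chan g)\<rparr>)"
| client_confirm:
    "\<lbrakk>reach n f Byz g; cst g T = Waiting ts;
      card {s. s < n \<and> ts s \<noteq> None} \<ge> n - f\<rbrakk> \<Longrightarrow>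
     reach n f Byz (g\<lparr>cst := (cst g)(T := Done),
                    chan := bcast n (Client T) (Confirm T (client_ts n f ts)) (chan g),
                    sigs := insert (Confirm T (client_ts n f ts)) (sigs g)\<rparr>)"
| server_propose:
    "\<lbrakk>reach n f Byz g; s < n; s \<notin> Byz; chan g (Client c) (Server s) = Propose T # rest;
      st = sst g s\<rbrakk> \<Longrightarrow>
     reach n f Byz (g\<lparr>sst := (sst g)(s := st\<lparr>proposed := (proposed st)(s :=
                              insert (T, clock st) (proposed st s))\<rparr>),
                    chan := send (Server s) (Client c) (ProposeAck T (clock st))
                              (bcast n (Server s) (Proposed T (clock st))
                                (deq (Client c) (Server s) (chan g)))\<rparr>)"
| server_proposed:
    "\<lbrakk>reach n f Byz g; s < n; s \<notin> Byz; chan g (Server r) (Server s) = Proposed T k # rest;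
      st = sst g s\<rbrakk> \<Longrightarrow>
     reach n f Byz (g\<lparr>sst := (sst g)(s := st\<lparr>proposed := (proposed st)(r :=
                              insert (T, k) (proposed st r))\<rparr>),
                    chan := deq (Server r) (Server s) (chan g)\<rparr>)"
| server_confirm:
    "\<lbrakk>reach n f Byz g; s < n; s \<notin> Byz; chan g p (Server s) = Confirm T t # rest;
      st = sst g s\<rbrakk> \<Longrightarrow>
     reach n f Byz (g\<lparr>sst := (sst g)(s := st\<lparr>clock := max (clock st) t,
                              confirmed := (confirmed st)(t := insert T (confirmed st t)),
                              forwarded := insert (T, t) (forwarded st)\<rparr>),
                    chan := (if (T, t) \<in> forwarded st then deq p (Server s) (chan g)
                             else bcast n (Server s) (Confirm T t) (deq p (Server s) (chan g)))\<rparr>)"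
| server_ignore:
    "\<lbrakk>reach n f Byz g; s < n; s \<notin> Byz; chan g p (Server s) = m # rest;
      \<not> (\<exists>c T. p = Client c \<and> m = Propose T);
      \<not> (\<exists>r T k. p = Server r \<and> m = Proposed T k);
      \<not> (\<exists>T t. m = Confirm T t)\<rbrakk> \<Longrightarrow>
     reach n f Byz (g\<lparr>chan := deq p (Server s) (chan g)\<rparr>)"
| byz_send:
    "\<lbrakk>reach n f Byz g; b \<in> Byz; byz_ok (sigs g) m\<rbrakk> \<Longrightarrow>
     reach n f Byz (g\<lparr>chan := send (Server b) q m (chan g)\<rparr>)"
| byz_recv:
    "\<lbrakk>reach n f Byz g; b \<in> Byz; chan g p (Server b) = m # rest\<rbrakk> \<Longrightarrow>
     reach n f Byz (g\<lparr>chan := deq p (Server b) (chan g)\<rparr>)"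

end

theory Submission
  imports Defs
begin

text \<open>A client signs a Confirm message only when it moves to Done, hence at most once,
  so each transaction has at most one signed Confirm. Correct servers only confirm
  what they receive, every Confirm in transit is signed (Byzantine servers cannot
  forge one), and therefore any two correct servers confirm a transaction at the
  same timestamp.\<close>

lemma set_deq_subset: "set (deq p q ch a b) \<subseteq> set (ch a b)"
  by (cases "ch p q") (auto simp: deq_def)

lemma set_bcast: "set (bcast n p m ch a b) \<subseteq> insert m (set (ch a b))"
  by (auto simp: bcast_def)

lemma set_send: "set (send p q m ch a b) \<subseteq> insert m (set (ch a b))"
  by (auto simp: send_def)

lemmas set_chan_updates = set_deq_subset[THEN subsetD] set_bcast[THEN subsetD]
  set_send[THEN subsetD]

definition signed_confirms_done :: "'tx gstate \<Rightarrow> bool" where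
  "signed_confirms_done g \<longleftrightarrow> (\<forall>T t. Confirm T t \<in> sigs g \<longrightarrow> cst g T = Done)"

definition signed_confirms_unique :: "'tx gstate \<Rightarrow> bool" where
  "signed_confirms_unique g \<longleftrightarrow>
     (\<forall>T t t'. Confirm T t \<in> sigs g \<longrightarrow> Confirm T t' \<in> sigs g \<longrightarrow> t = t')"

definition chan_confirms_signed :: "'tx gstate \<Rightarrow> bool" where
  "chan_confirms_signed g \<longleftrightarrow>
     (\<forall>p q T t. Confirm T t \<in> set (chan g p q) \<longrightarrow> Confirm T t \<in> sigs g)"

definition confirmed_signed :: "'tx gstate \<Rightarrow> bool" where
  "confirmed_signed g \<longleftrightarrow> (\<forall>s T t. T \<in> confirmed (sst g s) t \<longrightarrow> Confirm T t \<in> sigs g)"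

definition confirm_inv :: "'tx gstate \<Rightarrow> bool" where
  "confirm_inv g \<longleftrightarrow> signed_confirms_done g \<and> signed_confirms_unique g \<and>
     chan_confirms_signed g \<and> confirmed_signed g"

lemmas confirm_inv_defs = confirm_inv_def signed_confirms_done_def
  signed_confirms_unique_def chan_confirms_signed_def confirmed_signed_def

lemma reach_confirm_inv:
  assumes "reach n f Byz g"
  shows "confirm_inv g"
  using assms
proof (induction rule: reach.induct)
  case init
  then show ?case by (simp add: confirm_inv_defs gstate0_def sstate0_def)
next
  case (client_propose g T)
  then show ?case by (auto simp: confirm_inv_defs dest!: set_chan_updates)
next
  case (client_recv g s T m rest)
  then show ?case
    by (auto simp: confirm_inv_defs dest!: set_chan_updates split: cstate.splits msg.splits)
next
  case (client_confirm g T ts)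
  \<comment> \<open>T was Waiting, so no Confirm for T had been signed before.\<close>
  then show ?case by (auto simp: confirm_inv_defs dest!: set_chan_updates)
next
  case (server_propose g s c T rest st)
  then show ?case by (auto simp: confirm_inv_defs dest!: set_chan_updates)
next
  case (server_proposed g s r T k rest st)
  then show ?case by (auto simp: confirm_inv_defs dest!: set_chan_updates)
next
  case (server_confirm g s p T t rest st)
  then have "Confirm T t \<in> sigs g"
    unfolding confirm_inv_def chan_confirms_signed_def by (metis list.set_intros(1))
  with server_confirm show ?case
    by (auto simp: confirm_inv_defs dest!: set_chan_updates split: if_splits)
next
  case (server_ignore g s p m rest)
  then show ?case by (auto simp: confirm_inv_defs dest!: set_chan_updates)
next
  case (byz_send g b m q)
  then show ?case by (auto simp: confirm_inv_defs byz_ok_def dest!: set_chan_updates)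
next
  case (byz_recv g b p m rest)
  then show ?case by (auto simp: confirm_inv_defs dest!: set_chan_updates)
qed

theorem lemma1:
  fixes n f :: nat and Byz :: "nat set" and g :: "'tx gstate"
    and s1 s2 :: nat and T :: 'tx and t t' :: int
  assumes "n = 4 * f + 1"
    and "Byz \<subseteq> {..<n}" and "card Byz \<le> f"
    and "reach n f Byz g"
    and "s1 < n" and "s1 \<notin> Byz" and "s2 < n" and "s2 \<notin> Byz"
    and "T \<in> confirmed (sst g s1) t"
    and "T \<in> confirmed (sst g s2) t'"
  shows "t = t'"
proof -
  have inv: "confirm_inv g"
    using assms(4) by (rule reach_confirm_inv)
  then have "Confirm T t \<in> sigs g" and "Confirm T t' \<in> sigs g"
    using assms(9,10) by (auto simp: confirm_inv_def confirmed_signed_def)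
  with inv show ?thesis
    by (auto simp: confirm_inv_def signed_confirms_unique_def)
qed

end
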